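(* Let $V$ be a finite set of variables and let $(\mathit{base}_0, \mathit{stay}_0, \mathit{step}_0, \mathit{conc}_0)$ and $(\mathit{base}_1, \mathit{stay}_1, \mathit{step}_1, \mathit{conc}_1)$ be generalized acceleration lemmas (GALs) over $V$. Define $$\mathit{stayBase} := \bigwedge_{i \in \{0,1\}}\big((\mathit{base}_i \land \lnot \mathit{base}_{1 - i}) \to \mathit{base}_i[V \mapsto V']\big),$$ $$\mathit{step} := \mathit{stayBase} \land \bigvee_{i \in \{0, 1\}}(\mathit{step}_i \land \lnot\mathit{base}_i \land \mathit{stay}_{1 - i}).$$ Then the tuple $(\mathit{base}_0 \land \mathit{base}_1,\ \mathit{stay}_0 \land \mathit{stay}_1 \land \mathit{stayBase},\ \mathit{step},\ \mathit{conc}_0 \land \mathit{conc}_1)$ is also a GAL over $V$.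
   Context: Fix a first-order theory $T$. For a set of variables $X$, $\mathcal{A}(X)$ denotes the set of assignments $\nu: X \to \mathcal{V}$ (values). $X' = \{x' \mid x \in X\}$ is a disjoint primed copy of $X$; for $\nu \in \mathcal{A}(X)$, $\nu' \in \mathcal{A}(X')$ is given by $\nu'(x') = \nu(x)$; for $\nu_1,\nu_2 \in \mathcal{A}(X)$, $\langle \nu_1,\nu_2\rangle := \nu_1 \uplus \nu_2'$. $\nu \models_T \alpha$ denotes entailment in $T$. For a formula $\alpha$, $\alpha[V\mapsto V']$ is the result of replacing each $v\in V$ simultaneously by $v'$. A generalized acceleration lemma (GAL) over $V$ is a tuple $(\mathit{base}, \mathit{stay}, \mathit{step}, \mathit{conc})$ of first-order formulas with $\mathit{base}, \mathit{conc}$ having free variables in $V$ and $\mathit{stay}, \mathit{step}$ having free variables in $V \cup V'$, such that: (I) for every sequence $\alpha \in \mathcal{A}(V)^\omega$ with $\alpha[0] \models_T \mathit{conc}$, if (a) for all $i$, $\langle\alpha[i],\alpha[i+1]\rangle \models_T \mathit{step} \lor \mathit{stay}$, and (b) for all $i$ there is $j \ge i$ with $\langle\alpha[j],\alpha[j+1]\rangle \models_T \mathit{step}$, then there is $k$ with $\alpha[k] \models_T \mathit{base}$; and (II) for all $\nu,\nu' \in \mathcal{A}(V)$ with $\nu \models_T \mathit{conc}$ and $\langle \nu,\nu'\rangle \models_T \mathit{step}\lor\mathit{stay}$, we have $\nu' \models_T \mathit{conc}$. *)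

theory Defs
  imports Main
begin

text \<open>Semantic rendering: the variable set V is the finite type 'v; values are of type 'a.  A formula with free variables in V is
  identified with its satisfaction predicate on A(V) (i.e. nu |=_T alpha); a formula with
  free variables in V union V' is identified with a predicate on pairs <nu1, nu2>,
  where the unprimed variables are read from nu1 and the primed ones from nu2.\<close>

type_synonym ('v, 'a) assign = "'v \<Rightarrow> 'a"
type_synonym ('v, 'a) sform = "('v, 'a) assign \<Rightarrow> bool"
type_synonym ('v, 'a) tform = "('v, 'a) assign \<Rightarrow> ('v, 'a) assign \<Rightarrow> bool"

definition is_GAL ::
  "('v::finite, 'a) sform \<Rightarrow> ('v, 'a) tform \<Rightarrow> ('v, 'a) tform \<Rightarrow> ('v, 'a) sform \<Rightarrow> bool" where
  "is_GAL base stay step conc \<longleftrightarrow>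
     (\<forall>\<alpha> :: nat \<Rightarrow> ('v, 'a) assign.
        conc (\<alpha> 0) \<longrightarrow>
        (\<forall>i. step (\<alpha> i) (\<alpha> (Suc i)) \<or> stay (\<alpha> i) (\<alpha> (Suc i))) \<longrightarrow>
        (\<forall>i. \<exists>j\<ge>i. step (\<alpha> j) (\<alpha> (Suc j))) \<longrightarrow>
        (\<exists>k. base (\<alpha> k)))
   \<and> (\<forall>\<nu> \<nu>'. conc \<nu> \<longrightarrow> (step \<nu> \<nu>' \<or> stay \<nu> \<nu>') \<longrightarrow> conc \<nu>')"

definition stayBase :: "('v, 'a) sform \<Rightarrow> ('v, 'a) sform \<Rightarrow> ('v, 'a) tform" where
  "stayBase base0 base1 = (\<lambda>\<nu> \<nu>'.
     ((base0 \<nu> \<and> \<not> base1 \<nu>) \<longrightarrow> base0 \<nu>') \<and>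
     ((base1 \<nu> \<and> \<not> base0 \<nu>) \<longrightarrow> base1 \<nu>'))"

definition combined_step ::
  "('v, 'a) sform \<Rightarrow> ('v, 'a) tform \<Rightarrow> ('v, 'a) tform \<Rightarrow>
   ('v, 'a) sform \<Rightarrow> ('v, 'a) tform \<Rightarrow> ('v, 'a) tform \<Rightarrow> ('v, 'a) tform" where
  "combined_step base0 stay0 step0 base1 stay1 step1 = (\<lambda>\<nu> \<nu>'.
     stayBase base0 base1 \<nu> \<nu>' \<and>
     ((step0 \<nu> \<nu>' \<and> \<not> base0 \<nu> \<and> stay1 \<nu> \<nu>') \<or>
      (step1 \<nu> \<nu>' \<and> \<not> base1 \<nu> \<and> stay0 \<nu> \<nu>')))"

end

theory Submission
  imports Defs "HOL-Library.Infinite_Set"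
begin

text \<open>Suppose a run of the combined system never reaches a state satisfying both bases.
  Then stayBase makes each base, once reached, hold forever.  Infinitely many combined steps
  means that for some i, infinitely many steps are step_i-steps taken outside base_i.
  Such a run is a step_i/stay_i run with infinitely many step_i-steps, so GAL i forces base_i
  at some point; from then on base_i persists, contradicting the later step_i-steps
  taken outside base_i.\<close>

lemma stayBase_commute: "stayBase b1 b0 = stayBase b0 b1"
  by (auto simp: stayBase_def fun_eq_iff)

lemma stayBase_run_keeps_base:
  assumes stay_base: "\<And>i. stayBase b0 b1 (\<alpha> i) (\<alpha> (Suc i))"
    and never_both: "\<And>i. \<not> (b0 (\<alpha> i) \<and> b1 (\<alpha> i))"
    and "b0 (\<alpha> k)" "k \<le> m"
  shows "b0 (\<alpha> m)"
  using \<open>k \<le> m\<close> \<open>b0 (\<alpha> k)\<close>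
proof (induction m rule: dec_induct)
  case (step n)
  then show ?case using stay_base[of n] never_both[of n] by (auto simp: stayBase_def)
qed

lemma is_GAL_run_not_INFM_step_off_base:
  assumes "is_GAL b0 s0 t0 c0" and "c0 (\<alpha> 0)"
    and run: "\<And>i. t0 (\<alpha> i) (\<alpha> (Suc i)) \<or> s0 (\<alpha> i) (\<alpha> (Suc i))"
    and stay_base: "\<And>i. stayBase b0 b1 (\<alpha> i) (\<alpha> (Suc i))"
    and never_both: "\<And>i. \<not> (b0 (\<alpha> i) \<and> b1 (\<alpha> i))"
  shows "\<not> (\<exists>\<^sub>\<infinity>j. t0 (\<alpha> j) (\<alpha> (Suc j)) \<and> \<not> b0 (\<alpha> j))"
proof
  assume off_base: "\<exists>\<^sub>\<infinity>j. t0 (\<alpha> j) (\<alpha> (Suc j)) \<and> \<not> b0 (\<alpha> j)"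
  then have "\<forall>i. \<exists>j\<ge>i. t0 (\<alpha> j) (\<alpha> (Suc j))"
    unfolding INFM_nat_le by blast
  then obtain k where "b0 (\<alpha> k)"
    using assms(1,2) run unfolding is_GAL_def by blast
  moreover obtain j where "j \<ge> k" "\<not> b0 (\<alpha> j)"
    using off_base unfolding INFM_nat_le by blast
  ultimately show False
    using stayBase_run_keeps_base[where \<alpha> = \<alpha>, OF stay_base never_both] by blast
qed

lemma is_GAL_combined_run_reaches_joint_base:
  assumes gal0: "is_GAL b0 s0 t0 c0" and gal1: "is_GAL b1 s1 t1 c1"
    and "c0 (\<alpha> 0)" "c1 (\<alpha> 0)"
    and run: "\<And>i. combined_step b0 s0 t0 b1 s1 t1 (\<alpha> i) (\<alpha> (Suc i)) \<or>
                   (s0 (\<alpha> i) (\<alpha> (Suc i)) \<and> s1 (\<alpha> i) (\<alpha> (Suc i)) \<and>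
                    stayBase b0 b1 (\<alpha> i) (\<alpha> (Suc i)))"
    and steps: "\<exists>\<^sub>\<infinity>j. combined_step b0 s0 t0 b1 s1 t1 (\<alpha> j) (\<alpha> (Suc j))"
  shows "\<exists>k. b0 (\<alpha> k) \<and> b1 (\<alpha> k)"
proof (rule ccontr)
  assume "\<nexists>k. b0 (\<alpha> k) \<and> b1 (\<alpha> k)"
  then have never_both: "\<And>i. \<not> (b0 (\<alpha> i) \<and> b1 (\<alpha> i))"
    and never_both': "\<And>i. \<not> (b1 (\<alpha> i) \<and> b0 (\<alpha> i))" by blast+
  have stay_base: "\<And>i. stayBase b0 b1 (\<alpha> i) (\<alpha> (Suc i))"
    and run0: "\<And>i. t0 (\<alpha> i) (\<alpha> (Suc i)) \<or> s0 (\<alpha> i) (\<alpha> (Suc i))"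
    and run1: "\<And>i. t1 (\<alpha> i) (\<alpha> (Suc i)) \<or> s1 (\<alpha> i) (\<alpha> (Suc i))"
    using run by (auto simp: combined_step_def)
  have "\<exists>\<^sub>\<infinity>j. (t0 (\<alpha> j) (\<alpha> (Suc j)) \<and> \<not> b0 (\<alpha> j)) \<or>
              (t1 (\<alpha> j) (\<alpha> (Suc j)) \<and> \<not> b1 (\<alpha> j))"
    using steps by (rule INFM_mono) (auto simp: combined_step_def)
  moreover have stay_base': "\<And>i. stayBase b1 b0 (\<alpha> i) (\<alpha> (Suc i))"
    using stay_base by (simp add: stayBase_commute)
  ultimately show False
    unfolding INFM_disj_distrib
    using is_GAL_run_not_INFM_step_off_base[where \<alpha> = \<alpha>,
        OF gal0 \<open>c0 (\<alpha> 0)\<close> run0 stay_base never_both]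
      is_GAL_run_not_INFM_step_off_base[where \<alpha> = \<alpha>,
        OF gal1 \<open>c1 (\<alpha> 0)\<close> run1 stay_base' never_both']
    by blast
qed

theorem lemma1:
  fixes base0 conc0 base1 conc1 :: "('v::finite, 'a) sform"
    and stay0 step0 stay1 step1 :: "('v, 'a) tform"
  assumes "is_GAL base0 stay0 step0 conc0"
    and "is_GAL base1 stay1 step1 conc1"
  shows "is_GAL (\<lambda>\<nu>. base0 \<nu> \<and> base1 \<nu>)
                (\<lambda>\<nu> \<nu>'. stay0 \<nu> \<nu>' \<and> stay1 \<nu> \<nu>' \<and> stayBase base0 base1 \<nu> \<nu>')
                (combined_step base0 stay0 step0 base1 stay1 step1)
                (\<lambda>\<nu>. conc0 \<nu> \<and> conc1 \<nu>)"
proof -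
  have conc0_invariant: "\<And>\<nu> \<nu>'. conc0 \<nu> \<Longrightarrow> step0 \<nu> \<nu>' \<or> stay0 \<nu> \<nu>' \<Longrightarrow> conc0 \<nu>'"
    and conc1_invariant: "\<And>\<nu> \<nu>'. conc1 \<nu> \<Longrightarrow> step1 \<nu> \<nu>' \<or> stay1 \<nu> \<nu>' \<Longrightarrow> conc1 \<nu>'"
    using assms unfolding is_GAL_def by blast+
  show ?thesis
    unfolding is_GAL_def
  proof (rule conjI; intro allI impI)
    fix \<alpha> :: "nat \<Rightarrow> ('v, 'a) assign"
    assume "conc0 (\<alpha> 0) \<and> conc1 (\<alpha> 0)"
      and "\<forall>i. combined_step base0 stay0 step0 base1 stay1 step1 (\<alpha> i) (\<alpha> (Suc i)) \<or>
               stay0 (\<alpha> i) (\<alpha> (Suc i)) \<and> stay1 (\<alpha> i) (\<alpha> (Suc i)) \<and>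
               stayBase base0 base1 (\<alpha> i) (\<alpha> (Suc i))"
      and "\<forall>i. \<exists>j\<ge>i. combined_step base0 stay0 step0 base1 stay1 step1 (\<alpha> j) (\<alpha> (Suc j))"
    then show "\<exists>k. base0 (\<alpha> k) \<and> base1 (\<alpha> k)"
      using is_GAL_combined_run_reaches_joint_base[where \<alpha> = \<alpha>, OF assms]
      by (simp add: INFM_nat_le)
  next
    fix \<nu> \<nu>'
    assume "conc0 \<nu> \<and> conc1 \<nu>"
      and "combined_step base0 stay0 step0 base1 stay1 step1 \<nu> \<nu>' \<or>
           stay0 \<nu> \<nu>' \<and> stay1 \<nu> \<nu>' \<and> stayBase base0 base1 \<nu> \<nu>'"
    then show "conc0 \<nu>' \<and> conc1 \<nu>'"
      using conc0_invariant conc1_invariant by (auto simp: combined_step_def)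
  qed
qed

end
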